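(* Let $K\ge 2$, let $L_1,\dots,L_K:\mathbb{R}^d\to\mathbb{R}$ be twice differentiable and convex, and let $\mu>0$, $\rho,\delta\ge 0$. Assume every $L_k$ is $\mu$-smooth and $\rho$-Hessian Lipschitz. Let $\widehat{w}_1,\dots,\widehat{w}_{K-1}\in\mathbb{R}^d$ and let $H_1,\dots,H_{K-1}$ be symmetric positive semidefinite $d\times d$ matrices with $\|H_k\|_2\le\mu$ and $\|H_k-\nabla^2L_k(\widehat{w}_k)\|_2\le\delta$ for all $k\in[K-1]$. Define \[ \widetilde{L}_{K-1}(w)=\sum_{k=1}^{K-1}\Big(L_k(\widehat{w}_k)+(w-\widehat{w}_k)^\top\nabla L_k(\widehat{w}_k)+\tfrac12(w-\widehat{w}_k)^\top H_k(w-\widehat{w}_k)\Big), \] $\widetilde{F}(w)=\frac1K\big(\widetilde{L}_{K-1}(w)+L_K(w)\big)$ and $F(w)=\frac1K\sum_{k=1}^K L_k(w)$. Let $\mathcal{W}\subseteq\mathbb{R}^d$, let $F^*=\min_{w\in\mathcal{W}}F(w)$, $w^*\in\arg\min_{w\in\mathcal{W}}F(w)$, $\widetilde{w}^*\in\arg\min_{w\in\mathcal{W}}\widetilde{F}(w)$ (assumed to exist). Let $w_0=\widehat{w}_{K-1}$, $\widetilde{D}=\|w_0-\widetilde{w}^*\|_2$, and run $T$ iterations of $w_t=w_{t-1}-\eta\nabla\widetilde{F}(w_{t-1})$ with $\eta=1/\mu$, the iterates lying in $\mathcal{W}$. Then \[ F(w_T)-F^*\le\frac{\alpha}{T}+\beta,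 \] where $\alpha=2\mu\widetilde{D}^2$ and \[ \beta=\frac{1}{2K}\sum_{k=1}^{K-1}\Big[\delta\big(\|w^*-\widehat{w}_k\|_2^2+2\widetilde{D}^2+2\|\widetilde{w}^*-\widehat{w}_k\|_2^2\big)+\rho\big(\|w^*-\widehat{w}_k\|_2^3+4\widetilde{D}^3+4\|\widetilde{w}^*-\widehat{w}_k\|_2^3\big)\Big]. \]
   Context: $\|\cdot\|_2$ denotes the Euclidean norm for vectors and the operator norm for matrices; $[N]=\{1,\dots,N\}$. A differentiable $f$ is $\mu$-smooth if $\|\nabla f(w)-\nabla f(w')\|_2\le\mu\|w-w'\|_2$ for all $w,w'$, and $\rho$-Hessian Lipschitz if $\|\nabla^2 f(w)-\nabla^2 f(w')\|_2\le\rho\|w-w'\|_2$ for all $w,w'$. *)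

theory Defs
  imports "HOL-Analysis.Analysis"
begin

definition Ltil :: "nat \<Rightarrow> (nat \<Rightarrow> real^'n \<Rightarrow> real) \<Rightarrow> (nat \<Rightarrow> real^'n \<Rightarrow> real^'n)
    \<Rightarrow> (nat \<Rightarrow> real^'n) \<Rightarrow> (nat \<Rightarrow> real^'n^'n) \<Rightarrow> real^'n \<Rightarrow> real" where
  "Ltil K L G wh H w =
     (\<Sum>k=1..K-1. L k (wh k) + (w - wh k) \<bullet> G k (wh k)
                  + (1/2) * ((w - wh k) \<bullet> (H k *v (w - wh k))))"

definition Ftil :: "nat \<Rightarrow> (nat \<Rightarrow> real^'n \<Rightarrow> real) \<Rightarrow> (nat \<Rightarrow> real^'n \<Rightarrow> real^'n)
    \<Rightarrow> (nat \<Rightarrow> real^'n) \<Rightarrow> (nat \<Rightarrow> real^'n^'n) \<Rightarrow> real^'n \<Rightarrow> real" where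
  "Ftil K L G wh H w = (1 / real K) * (Ltil K L G wh H w + L K w)"

definition Fobj :: "nat \<Rightarrow> (nat \<Rightarrow> real^'n \<Rightarrow> real) \<Rightarrow> real^'n \<Rightarrow> real" where
  "Fobj K L w = (1 / real K) * (\<Sum>k=1..K. L k w)"

end

theory Submission
  imports Defs
begin

text \<open>
  The quadratic models of \<open>L\<^sub>1, \<dots>, L\<^bsub>K-1\<^esub>\<close> have positive semidefinite Hessians of norm
  at most \<open>\<mu>\<close>, so the surrogate \<open>Ftil\<close> is convex with \<open>\<mu>\<close>-Lipschitz gradient. Gradient descent
  with step \<open>1/\<mu>\<close> therefore comes within \<open>\<mu> D\<^sup>2 / (2T)\<close> of the minimum of \<open>Ftil\<close>, where
  \<open>D = norm (w 0 - wtstar)\<close>, and its iterates never move further than \<open>D\<close> from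
  \<open>wtstar\<close>, since they stay in \<open>W\<close>, where \<open>wtstar\<close> minimises \<open>Ftil\<close>. The objective \<open>Fobj\<close> differs from \<open>Ftil\<close> by the averaged model errors
  \<open>L\<^sub>k - q\<^sub>k\<close>; Taylor's theorem with a \<open>\<rho>\<close>-Lipschitz Hessian, together with the Hessian error
  \<open>\<delta>\<close>, bounds each of them by \<open>\<delta>/2 r\<^sup>2 + \<rho>/6 r\<^sup>3\<close> at distance \<open>r\<close> from the expansion
  point \<open>wh k\<close>. Evaluating this at \<open>w T\<close> and at \<open>wstar\<close>, and using
  \<open>Ftil wtstar \<le> Ftil wstar\<close>, gives the bound.
\<close>

section \<open>First- and second-order bounds along a segment\<close>

lemma DERIV_le_imp_increment_le:
  fixes f F f' F' :: "real \<Rightarrow> real"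
  assumes "a \<le> b"
    and "\<And>t. a \<le> t \<Longrightarrow> t \<le> b \<Longrightarrow> (f has_real_derivative f' t) (at t)"
    and "\<And>t. a \<le> t \<Longrightarrow> t \<le> b \<Longrightarrow> (F has_real_derivative F' t) (at t)"
    and "\<And>t. a \<le> t \<Longrightarrow> t \<le> b \<Longrightarrow> f' t \<le> F' t"
  shows "f b - f a \<le> F b - F a"
proof -
  have "(\<lambda>t. f t - F t) b \<le> (\<lambda>t. f t - F t) a"
    using \<open>a \<le> b\<close>
  proof (rule DERIV_nonpos_imp_nonincreasing)
    fix t assume "a \<le> t" "t \<le> b"
    then show "\<exists>y. ((\<lambda>t. f t - F t) has_real_derivative y) (at t) \<and> y \<le> 0"
      using assms(2-4) by (metis DERIV_diff diff_le_0_iff_le)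
  qed
  then show ?thesis by simp
qed

lemma DERIV_abs_le_imp_increment_abs_le:
  fixes f F f' F' :: "real \<Rightarrow> real"
  assumes "a \<le> b"
    and f: "\<And>t. a \<le> t \<Longrightarrow> t \<le> b \<Longrightarrow> (f has_real_derivative f' t) (at t)"
    and F: "\<And>t. a \<le> t \<Longrightarrow> t \<le> b \<Longrightarrow> (F has_real_derivative F' t) (at t)"
    and "\<And>t. a \<le> t \<Longrightarrow> t \<le> b \<Longrightarrow> \<bar>f' t\<bar> \<le> F' t"
  shows "\<bar>f b - f a\<bar> \<le> F b - F a"
proof -
  have "f b - f a \<le> F b - F a"
    using assms by (intro DERIV_le_imp_increment_le[OF \<open>a \<le> b\<close> f F]) (auto simp: abs_le_iff)
  moreover have "- f b - - f a \<le> F b - F a"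
    using assms by (intro DERIV_le_imp_increment_le[OF \<open>a \<le> b\<close> DERIV_minus[OF f] F])
      (auto simp: abs_le_iff)
  ultimately show ?thesis by linarith
qed

lemma has_real_derivative_along_line:
  fixes f :: "'a::real_normed_vector \<Rightarrow> real"
  assumes "(f has_derivative f') (at (a + t *\<^sub>R v))"
  shows "((\<lambda>s. f (a + s *\<^sub>R v)) has_real_derivative f' v) (at t)"
proof -
  have "((\<lambda>s. a + s *\<^sub>R v) has_derivative (\<lambda>s. s *\<^sub>R v)) (at t)"
    by (auto intro!: derivative_eq_intros)
  from has_derivative_compose[OF this assms]
  have "((\<lambda>s. f (a + s *\<^sub>R v)) has_derivative (\<lambda>s. f' (s *\<^sub>R v))) (at t)"
    by (simp add: o_def)
  moreover have "(\<lambda>s. f' (s *\<^sub>R v)) = (*) (f' v)"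
    using linear_cmul[OF has_derivative_linear[OF assms]] by (auto simp: mult.commute)
  ultimately show ?thesis by (simp add: has_field_derivative_def)
qed

lemma abs_quadratic_form_le_onorm:
  fixes A :: "real^'n^'n"
  shows "\<bar>v \<bullet> (A *v v)\<bar> \<le> onorm (\<lambda>u. A *v u) * norm v ^ 2"
proof -
  have "\<bar>v \<bullet> (A *v v)\<bar> \<le> norm v * norm (A *v v)" by (rule Cauchy_Schwarz_ineq2)
  also have "\<dots> \<le> norm v * (onorm (\<lambda>u. A *v u) * norm v)"
    by (intro mult_left_mono onorm) auto
  finally show ?thesis by (simp add: power2_eq_square algebra_simps)
qed

lemma hessian_lipschitz_taylor:
  fixes f :: "real^'n \<Rightarrow> real"
  assumes grad: "\<And>x. (f has_derivative (\<lambda>h. g x \<bullet> h)) (at x)"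
    and hess: "\<And>x. (g has_derivative (\<lambda>h. Hf x *v h)) (at x)"
    and lip: "\<And>x y. onorm (\<lambda>u. (Hf x - Hf y) *v u) \<le> \<rho> * norm (x - y)"
  shows "\<bar>f (a + v) - f a - g a \<bullet> v - 1/2 * (v \<bullet> (Hf a *v v))\<bar> \<le> \<rho> / 6 * norm v ^ 3"
proof -
  define c where "c = v \<bullet> (Hf a *v v)"
  define p where "p t = g (a + t *\<^sub>R v) \<bullet> v - g a \<bullet> v - t * c" for t
  define e where "e t = f (a + t *\<^sub>R v) - f a - t * (g a \<bullet> v) - t\<^sup>2 / 2 * c" for t
  define M where "M = \<rho> * norm v ^ 3"
  \<comment> \<open>\<open>e' = p\<close> and \<open>\<bar>p'\<bar> \<le> M t\<close>, with \<open>e 0 = p 0 = 0\<close>: integrate twice.\<close>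
  have dp: "(p has_real_derivative v \<bullet> ((Hf (a + t *\<^sub>R v) - Hf a) *v v)) (at t)" for t
  proof -
    have "((\<lambda>x. g x \<bullet> v) has_derivative (\<lambda>h. (Hf (a + t *\<^sub>R v) *v h) \<bullet> v)) (at (a + t *\<^sub>R v))"
      using hess by (auto intro!: derivative_eq_intros)
    from has_real_derivative_along_line[OF this] show ?thesis
      unfolding p_def c_def
      by (auto intro!: derivative_eq_intros
          simp: matrix_vector_mult_diff_rdistrib inner_diff_right inner_commute)
  qed
  have de: "(e has_real_derivative p t) (at t)" for t
    unfolding e_def p_def
    using has_real_derivative_along_line[OF grad]
    by (auto intro!: derivative_eq_intros simp: inner_commute)
  have "\<bar>v \<bullet> ((Hf (a + t *\<^sub>R v) - Hf a) *v v)\<bar> \<le> M * t" if "0 \<le> t" for t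
  proof -
    have "\<bar>v \<bullet> ((Hf (a + t *\<^sub>R v) - Hf a) *v v)\<bar>
        \<le> onorm (\<lambda>u. (Hf (a + t *\<^sub>R v) - Hf a) *v u) * norm v ^ 2"
      by (rule abs_quadratic_form_le_onorm)
    also have "\<dots> \<le> \<rho> * norm (t *\<^sub>R v) * norm v ^ 2"
      using lip[of "a + t *\<^sub>R v" a] by (intro mult_right_mono) auto
    finally show ?thesis using that by (simp add: M_def power2_eq_square power3_eq_cube mult_ac)
  qed
  then have "\<bar>p t - p 0\<bar> \<le> M * t\<^sup>2 / 2 - M * 0\<^sup>2 / 2" if "0 \<le> t" for t
    using that dp by (intro DERIV_abs_le_imp_increment_abs_le)
      (auto intro!: derivative_eq_intros simp: mult.commute)
  then have "\<bar>e 1 - e 0\<bar> \<le> M * 1 ^ 3 / 6 - M * 0 ^ 3 / 6"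
    using de by (intro DERIV_abs_le_imp_increment_abs_le)
      (auto intro!: derivative_eq_intros simp: p_def power2_eq_square mult_ac)
  then show ?thesis by (simp add: e_def c_def M_def)
qed

lemma convex_on_gradient_inequality:
  fixes f :: "'a::real_normed_vector \<Rightarrow> real"
  assumes convex: "convex_on UNIV f" and deriv: "(f has_derivative f') (at x)"
  shows "f x + f' (z - x) \<le> f z"
proof -
  define \<phi> where "\<phi> t = f (x + t *\<^sub>R (z - x))" for t
  have "convex_on UNIV \<phi>"
  proof (rule convex_onI)
    fix t a b :: real
    have "x + ((1 - t) *\<^sub>R a + t *\<^sub>R b) *\<^sub>R (z - x)
        = (1 - t) *\<^sub>R (x + a *\<^sub>R (z - x)) + t *\<^sub>R (x + b *\<^sub>R (z - x))"
      by (simp add: algebra_simps)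
    moreover assume "0 < t" "t < 1"
    ultimately show "\<phi> ((1 - t) *\<^sub>R a + t *\<^sub>R b) \<le> (1 - t) * \<phi> a + t * \<phi> b"
      unfolding \<phi>_def using convex_onD[OF convex, of t] by simp
  qed simp
  moreover have "(\<phi> has_real_derivative f' (z - x)) (at 0)"
    unfolding \<phi>_def using has_real_derivative_along_line[of f f' x 0 "z - x"] deriv by simp
  ultimately have "f' (z - x) * (1 - 0) \<le> \<phi> 1 - \<phi> 0"
    by (intro convex_on_imp_above_tangent) auto
  then show ?thesis by (simp add: \<phi>_def)
qed

lemma lipschitz_gradient_upper_bound:
  fixes f :: "'a::real_inner \<Rightarrow> real"
  assumes grad: "\<And>x. (f has_derivative (\<lambda>h. g x \<bullet> h)) (at x)"
    and lip: "\<And>x y. norm (g x - g y) \<le> \<mu> * norm (x - y)"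
  shows "f y \<le> f x + g x \<bullet> (y - x) + \<mu> / 2 * (norm (y - x))\<^sup>2"
proof -
  define v where "v = y - x"
  define e where "e t = f (x + t *\<^sub>R v) - t * (g x \<bullet> v)" for t
  define M where "M = \<mu> * norm v ^ 2"
  have de: "(e has_real_derivative (g (x + t *\<^sub>R v) - g x) \<bullet> v) (at t)" for t
    unfolding e_def using has_real_derivative_along_line[OF grad]
    by (auto intro!: derivative_eq_intros simp: inner_diff_left)
  have "(g (x + t *\<^sub>R v) - g x) \<bullet> v \<le> M * t" if "0 \<le> t" for t
  proof -
    have "(g (x + t *\<^sub>R v) - g x) \<bullet> v \<le> norm (g (x + t *\<^sub>R v) - g x) * norm v"
      by (rule norm_cauchy_schwarz)
    also have "\<dots> \<le> \<mu> * norm (t *\<^sub>R v) * norm v"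
      using lip[of "x + t *\<^sub>R v" x] by (intro mult_right_mono) auto
    finally show ?thesis using that by (simp add: M_def power2_eq_square mult_ac)
  qed
  then have "e 1 - e 0 \<le> M * 1\<^sup>2 / 2 - M * 0\<^sup>2 / 2"
    by (intro DERIV_le_imp_increment_le[OF _ de])
      (auto intro!: derivative_eq_intros simp: mult.commute)
  then show ?thesis by (simp add: e_def v_def M_def algebra_simps)
qed

section \<open>Gradient descent on a smooth convex function\<close>

locale gradient_descent =
  fixes f :: "'a::real_inner \<Rightarrow> real" and g :: "'a \<Rightarrow> 'a" and \<mu> :: real and x :: "nat \<Rightarrow> 'a"
  assumes has_gradient: "\<And>y. (f has_derivative (\<lambda>h. g y \<bullet> h)) (at y)"
    and gradient_lipschitz: "\<And>y z. norm (g y - g z) \<le> \<mu> * norm (y - z)"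
    and gradient_inequality: "\<And>y z. f y + g y \<bullet> (z - y) \<le> f z"
    and step_size_pos: "0 < \<mu>"
    and iterate_Suc: "\<And>t. x (Suc t) = x t - (1 / \<mu>) *\<^sub>R g (x t)"
begin

lemma sufficient_decrease: "f (x (Suc t)) \<le> f (x t) - (norm (g (x t)))\<^sup>2 / (2 * \<mu>)"
proof -
  have step: "x (Suc t) - x t = - ((1 / \<mu>) *\<^sub>R g (x t))"
    by (simp add: iterate_Suc)
  have "f (x (Suc t)) \<le> f (x t) + g (x t) \<bullet> (x (Suc t) - x t) + \<mu> / 2 * (norm (x (Suc t) - x t))\<^sup>2"
    by (rule lipschitz_gradient_upper_bound[OF has_gradient gradient_lipschitz])
  also have "\<dots> = f (x t) - (norm (g (x t)))\<^sup>2 / \<mu> + \<mu> / 2 * ((norm (g (x t)))\<^sup>2 / \<mu>\<^sup>2)"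
    unfolding step using step_size_pos by (simp add: power2_norm_eq_inner power_divide)
  also have "\<dots> = f (x t) - (norm (g (x t)))\<^sup>2 / (2 * \<mu>)"
    using step_size_pos by (simp add: field_simps power2_eq_square)
  finally show ?thesis .
qed

lemma decreasing: "f (x (Suc t)) \<le> f (x t)"
proof -
  have "0 \<le> (norm (g (x t)))\<^sup>2 / (2 * \<mu>)"
    using step_size_pos by simp
  then show ?thesis using sufficient_decrease[of t] by linarith
qed

lemma step_bound: "f (x (Suc t)) - f z \<le> \<mu> / 2 * ((norm (x t - z))\<^sup>2 - (norm (x (Suc t) - z))\<^sup>2)"
proof -
  define u where "u = (1 / \<mu>) *\<^sub>R g (x t)"
  have "x (Suc t) - z = (x t - z) - u"
    by (simp add: iterate_Suc u_def)
  then have "(norm (x (Suc t) - z))\<^sup>2 = (norm (x t - z))\<^sup>2 + (norm u)\<^sup>2 - 2 * ((x t - z) \<bullet> u)"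
    by (simp only:) (simp add: power2_norm_eq_inner inner_diff_left inner_diff_right inner_commute)
  also have "\<dots> = (norm (x t - z))\<^sup>2 + (norm (g (x t)))\<^sup>2 / \<mu>\<^sup>2 - 2 * (g (x t) \<bullet> (x t - z)) / \<mu>"
    using step_size_pos by (simp add: u_def power_divide inner_commute)
  finally have dist_Suc: "(norm (x (Suc t) - z))\<^sup>2 = \<dots>" .
  have "\<mu> / 2 * ((norm (x t - z))\<^sup>2 - (norm (x (Suc t) - z))\<^sup>2)
      = g (x t) \<bullet> (x t - z) - (norm (g (x t)))\<^sup>2 / (2 * \<mu>)"
    unfolding dist_Suc using step_size_pos by (simp add: field_simps power2_eq_square)
  moreover have "f (x t) \<le> f z + g (x t) \<bullet> (x t - z)"
    using gradient_inequality[of "x t" z] by (simp add: inner_diff_right)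
  ultimately show ?thesis using sufficient_decrease[of t] by linarith
qed

lemma convergence_rate:
  "real n * (f (x n) - f z) + \<mu> / 2 * (norm (x n - z))\<^sup>2 \<le> \<mu> / 2 * (norm (x 0 - z))\<^sup>2"
proof (induction n)
  case 0
  then show ?case by simp
next
  case (Suc n)
  have "real n * (f (x (Suc n)) - f z) \<le> real n * (f (x n) - f z)"
    using decreasing[of n] by (intro mult_left_mono) auto
  then show ?case using Suc step_bound[of n z] by (simp add: algebra_simps)
qed

lemma suboptimality_le:
  assumes "0 < n"
  shows "f (x n) - f z \<le> \<mu> * (norm (x 0 - z))\<^sup>2 / (2 * real n)"
proof -
  have "0 \<le> \<mu> / 2 * (norm (x n - z))\<^sup>2"
    using step_size_pos by simp
  then have "real n * (f (x n) - f z) \<le> \<mu> / 2 * (norm (x 0 - z))\<^sup>2"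
    using convergence_rate[of n z] by linarith
  then show ?thesis using assms by (simp add: field_simps)
qed

lemma dist_le_initial:
  assumes "\<And>t. 0 < t \<Longrightarrow> t \<le> n \<Longrightarrow> f z \<le> f (x t)"
  shows "norm (x n - z) \<le> norm (x 0 - z)"
  using assms
proof (induction n)
  case 0
  then show ?case by simp
next
  case (Suc n)
  have "f z \<le> f (x (Suc n))"
    using Suc.prems by blast
  then have "0 \<le> \<mu> / 2 * ((norm (x n - z))\<^sup>2 - (norm (x (Suc n) - z))\<^sup>2)"
    using step_bound[of n z] by linarith
  then have "(norm (x (Suc n) - z))\<^sup>2 \<le> (norm (x n - z))\<^sup>2"
    using step_size_pos by (simp add: zero_le_mult_iff)
  then have "norm (x (Suc n) - z) \<le> norm (x n - z)"
    by (rule power2_le_imp_le) simp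
  moreover have "norm (x n - z) \<le> norm (x 0 - z)"
    using Suc.prems by (intro Suc.IH) auto
  ultimately show ?case by linarith
qed

end

section \<open>Quadratic models\<close>

lemma power2_add_le: "(a + b)\<^sup>2 \<le> 2 * a\<^sup>2 + 2 * (b::real)\<^sup>2"
  using zero_le_power2[of "a - b"] unfolding power2_diff power2_sum by linarith

lemma power3_add_le:
  fixes a b :: real
  assumes "0 \<le> a" "0 \<le> b"
  shows "(a + b) ^ 3 \<le> 4 * a ^ 3 + 4 * b ^ 3"
proof -
  have "4 * a ^ 3 + 4 * b ^ 3 - (a + b) ^ 3 = 3 * ((a + b) * (a - b)\<^sup>2)"
    by (simp add: power3_eq_cube power2_eq_square algebra_simps)
  moreover have "0 \<le> (a + b) * (a - b)\<^sup>2"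
    using assms by simp
  ultimately show ?thesis by linarith
qed

definition quadratic_model :: "real \<Rightarrow> real^'n \<Rightarrow> real^'n^'n \<Rightarrow> real^'n \<Rightarrow> real^'n \<Rightarrow> real" where
  "quadratic_model c g A a x = c + (x - a) \<bullet> g + 1/2 * ((x - a) \<bullet> (A *v (x - a)))"

lemma symmetric_matrix_inner:
  fixes A :: "real^'n^'n"
  assumes "transpose A = A"
  shows "u \<bullet> (A *v v) = (A *v u) \<bullet> v"
  by (metis assms dot_lmul_matrix vector_transpose_matrix)

lemma quadratic_model_has_derivative:
  assumes "transpose A = A"
  shows "(quadratic_model c g A a has_derivative (\<lambda>h. (g + A *v (x - a)) \<bullet> h)) (at x)"
proof -
  have "(quadratic_model c g A a has_derivative
      (\<lambda>h. h \<bullet> g + 1/2 * (h \<bullet> (A *v (x - a)) + (x - a) \<bullet> (A *v h)))) (at x)"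
    unfolding quadratic_model_def [abs_def]
    by (auto intro!: derivative_eq_intros bounded_linear_imp_has_derivative
        simp: matrix_vector_mult_diff_distrib)
  moreover have "h \<bullet> g + 1/2 * (h \<bullet> (A *v (x - a)) + (x - a) \<bullet> (A *v h))
      = (g + A *v (x - a)) \<bullet> h" for h
    using symmetric_matrix_inner[OF assms, of "x - a" h]
    by (simp add: inner_add_left inner_add_right inner_commute)
  ultimately show ?thesis by simp
qed

lemma quadratic_model_gradient_inequality:
  assumes "transpose A = A" and "\<And>v. 0 \<le> v \<bullet> (A *v v)"
  shows "quadratic_model c g A a x + (g + A *v (x - a)) \<bullet> (z - x) \<le> quadratic_model c g A a z"
proof -
  define u d where "u = x - a" and "d = z - x"
  have "z - a = u + d" by (simp add: u_def d_def)
  then have "quadratic_model c g A a z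
      = quadratic_model c g A a x + (g + A *v u) \<bullet> d + 1/2 * (d \<bullet> (A *v d))"
    unfolding quadratic_model_def u_def[symmetric]
    using symmetric_matrix_inner[OF assms(1), of u d]
    by (simp add: matrix_vector_right_distrib inner_add_left inner_add_right inner_commute)
  then show ?thesis using assms(2)[of d] by (simp add: u_def d_def)
qed

lemma quadratic_model_error:
  fixes f :: "real^'n \<Rightarrow> real"
  assumes grad: "\<And>x. (f has_derivative (\<lambda>h. g x \<bullet> h)) (at x)"
    and hess: "\<And>x. (g has_derivative (\<lambda>h. Hf x *v h)) (at x)"
    and lip: "\<And>x y. onorm (\<lambda>u. (Hf x - Hf y) *v u) \<le> \<rho> * norm (x - y)"
    and approx: "onorm (\<lambda>u. (A - Hf a) *v u) \<le> \<delta>"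
  shows "\<bar>f x - quadratic_model (f a) (g a) A a x\<bar>
    \<le> \<delta> / 2 * (norm (x - a))\<^sup>2 + \<rho> / 6 * norm (x - a) ^ 3"
proof -
  have "\<bar>f x - f a - g a \<bullet> (x - a) - 1/2 * ((x - a) \<bullet> (Hf a *v (x - a)))\<bar>
      \<le> \<rho> / 6 * norm (x - a) ^ 3"
    using hessian_lipschitz_taylor[OF grad hess lip, of a "x - a"] by simp
  moreover have "\<bar>(x - a) \<bullet> ((A - Hf a) *v (x - a))\<bar> \<le> \<delta> * (norm (x - a))\<^sup>2"
    using abs_quadratic_form_le_onorm[of "x - a" "A - Hf a"] approx
    by (meson mult_right_mono order_trans zero_le_power2)
  moreover have "quadratic_model (f a) (g a) A a x
      = f a + g a \<bullet> (x - a) + 1/2 * ((x - a) \<bullet> (Hf a *v (x - a)))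
        + 1/2 * ((x - a) \<bullet> ((A - Hf a) *v (x - a)))"
    by (simp add: quadratic_model_def matrix_vector_mult_diff_rdistrib inner_diff_right
        inner_commute algebra_simps)
  ultimately show ?thesis
    unfolding abs_le_iff by linarith
qed

lemma quadratic_model_error_diff_le:
  fixes f :: "real^'n \<Rightarrow> real"
  assumes grad: "\<And>x. (f has_derivative (\<lambda>h. g x \<bullet> h)) (at x)"
    and hess: "\<And>x. (g has_derivative (\<lambda>h. Hf x *v h)) (at x)"
    and lip: "\<And>x y. onorm (\<lambda>u. (Hf x - Hf y) *v u) \<le> \<rho> * norm (x - y)"
    and approx: "onorm (\<lambda>u. (A - Hf a) *v u) \<le> \<delta>"
    and "0 \<le> \<delta>" "0 \<le> \<rho>" and near: "norm (x - c) \<le> D"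
  shows "(f x - quadratic_model (f a) (g a) A a x) - (f y - quadratic_model (f a) (g a) A a y)
    \<le> 1/2 * (\<delta> * ((norm (y - a))\<^sup>2 + 2 * D\<^sup>2 + 2 * (norm (c - a))\<^sup>2)
            + \<rho> * ((norm (y - a)) ^ 3 + 4 * D ^ 3 + 4 * (norm (c - a)) ^ 3))"
proof -
  define r s b where "r = norm (x - a)" and "s = norm (c - a)" and "b = norm (y - a)"
  have "0 \<le> D" using near norm_ge_zero order_trans by blast
  have "r \<le> D + s"
    using norm_triangle_ineq[of "x - c" "c - a"] near by (simp add: r_def s_def)
  then have "r\<^sup>2 \<le> (D + s)\<^sup>2" and "r ^ 3 \<le> (D + s) ^ 3"
    by (simp_all add: power_mono r_def)
  then have r2: "r\<^sup>2 \<le> 2 * D\<^sup>2 + 2 * s\<^sup>2" and r3: "r ^ 3 \<le> 4 * D ^ 3 + 4 * s ^ 3"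
    using power2_add_le[of D s] power3_add_le[OF \<open>0 \<le> D\<close>, of s] by (simp_all add: s_def)
  have "f x - quadratic_model (f a) (g a) A a x \<le> \<delta> / 2 * r\<^sup>2 + \<rho> / 6 * r ^ 3"
    using quadratic_model_error[OF grad hess lip approx, of x] by (simp add: r_def abs_le_iff)
  \<comment> \<open>The claimed bound is looser than the estimate: \<open>\<rho>/6\<close> is relaxed to \<open>\<rho>/2\<close>.\<close>
  also have "\<dots> \<le> \<delta> / 2 * (2 * D\<^sup>2 + 2 * s\<^sup>2) + \<rho> / 2 * (4 * D ^ 3 + 4 * s ^ 3)"
    using r2 r3 \<open>0 \<le> \<delta>\<close> \<open>0 \<le> \<rho>\<close> \<open>0 \<le> D\<close> by (intro add_mono mult_mono) (auto simp: s_def r_def)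
  finally have ex: "f x - quadratic_model (f a) (g a) A a x \<le> \<dots>" .
  have "- (f y - quadratic_model (f a) (g a) A a y) \<le> \<delta> / 2 * b\<^sup>2 + \<rho> / 6 * b ^ 3"
    using quadratic_model_error[OF grad hess lip approx, of y] by (simp add: b_def abs_le_iff)
  also have "\<dots> \<le> \<delta> / 2 * b\<^sup>2 + \<rho> / 2 * b ^ 3"
    using \<open>0 \<le> \<rho>\<close> by (simp add: b_def mult_right_mono)
  finally have ey: "- (f y - quadratic_model (f a) (g a) A a y) \<le> \<dots>" .
  from ex ey show ?thesis
    unfolding r_def s_def b_def[symmetric] by (simp add: algebra_simps)
qed

section \<open>The surrogate objective\<close>

lemma has_gradient_unique:
  fixes f :: "'a::real_inner \<Rightarrow> real"
  assumes "(f has_derivative (\<lambda>h. a \<bullet> h)) (at x)" and "(f has_derivative (\<lambda>h. b \<bullet> h)) (at x)"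
  shows "a = b"
  by (metis assms has_derivative_unique vector_eq_rdot)

lemma Ltil_eq_sum_quadratic_model:
  "Ltil K L G wh H x = (\<Sum>k=1..K-1. quadratic_model (L k (wh k)) (G k (wh k)) (H k) (wh k) x)"
  by (simp add: Ltil_def quadratic_model_def)

definition Ftil_grad :: "nat \<Rightarrow> (nat \<Rightarrow> real^'n \<Rightarrow> real^'n) \<Rightarrow> (nat \<Rightarrow> real^'n)
    \<Rightarrow> (nat \<Rightarrow> real^'n^'n) \<Rightarrow> real^'n \<Rightarrow> real^'n" where
  "Ftil_grad K G wh H x = (1 / real K) *\<^sub>R ((\<Sum>k=1..K-1. G k (wh k) + H k *v (x - wh k)) + G K x)"

lemma Ftil_has_derivative:
  assumes H_sym: "\<And>k. k \<in> {1..K-1} \<Longrightarrow> transpose (H k) = H k"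
    and grad: "(L K has_derivative (\<lambda>h. G K x \<bullet> h)) (at x)"
  shows "(Ftil K L G wh H has_derivative (\<lambda>h. Ftil_grad K G wh H x \<bullet> h)) (at x)"
proof -
  have "((\<lambda>x. (1 / real K) *
          ((\<Sum>k=1..K-1. quadratic_model (L k (wh k)) (G k (wh k)) (H k) (wh k) x) + L K x))
      has_derivative
        (\<lambda>h. (1 / real K) * ((\<Sum>k=1..K-1. (G k (wh k) + H k *v (x - wh k)) \<bullet> h) + G K x \<bullet> h)))
      (at x)"
    by (intro has_derivative_mult_right has_derivative_add has_derivative_sum
        quadratic_model_has_derivative H_sym grad)
  then show ?thesis
    by (simp add: Ftil_def [abs_def] Ltil_eq_sum_quadratic_model Ftil_grad_def inner_sum_left
        inner_add_left)
qed

lemma Ftil_grad_lipschitz: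
  assumes "1 \<le> K" and H_norm: "\<And>k. k \<in> {1..K-1} \<Longrightarrow> onorm (\<lambda>v. H k *v v) \<le> \<mu>"
    and lip: "norm (G K x - G K y) \<le> \<mu> * norm (x - y)"
  shows "norm (Ftil_grad K G wh H x - Ftil_grad K G wh H y) \<le> \<mu> * norm (x - y)"
proof -
  have "Ftil_grad K G wh H x - Ftil_grad K G wh H y
      = (1 / real K) *\<^sub>R ((\<Sum>k=1..K-1. H k *v (x - y)) + (G K x - G K y))"
    by (simp add: Ftil_grad_def sum_subtractf[symmetric] matrix_vector_mult_diff_distrib
        scaleR_diff_right[symmetric] algebra_simps)
  moreover have "norm ((\<Sum>k=1..K-1. H k *v (x - y)) + (G K x - G K y)) \<le> real K * (\<mu> * norm (x - y))"
  proof -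
    have "norm ((\<Sum>k=1..K-1. H k *v (x - y)) + (G K x - G K y))
        \<le> (\<Sum>k=1..K-1. norm (H k *v (x - y))) + norm (G K x - G K y)"
      by (intro order_trans[OF norm_triangle_ineq] add_mono norm_sum order_refl)
    also have "\<dots> \<le> (\<Sum>k=1..K-1. \<mu> * norm (x - y)) + \<mu> * norm (x - y)"
    proof (intro add_mono sum_mono lip)
      fix k assume "k \<in> {1..K-1}"
      have "norm (H k *v (x - y)) \<le> onorm (\<lambda>v. H k *v v) * norm (x - y)"
        by (simp add: onorm)
      also have "\<dots> \<le> \<mu> * norm (x - y)"
        using H_norm[OF \<open>k \<in> {1..K-1}\<close>] by (intro mult_right_mono) auto
      finally show "norm (H k *v (x - y)) \<le> \<mu> * norm (x - y)" .
    qed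
    also have "\<dots> = real K * (\<mu> * norm (x - y))"
      using \<open>1 \<le> K\<close> by (simp add: of_nat_diff algebra_simps)
    finally show ?thesis .
  qed
  ultimately show ?thesis
    using \<open>1 \<le> K\<close> by (simp add: divide_le_eq mult_ac)
qed

lemma Ftil_gradient_inequality:
  assumes H_sym: "\<And>k. k \<in> {1..K-1} \<Longrightarrow> transpose (H k) = H k"
    and H_psd: "\<And>k v. k \<in> {1..K-1} \<Longrightarrow> 0 \<le> v \<bullet> (H k *v v)"
    and convex: "convex_on UNIV (L K)" and grad: "(L K has_derivative (\<lambda>h. G K x \<bullet> h)) (at x)"
  shows "Ftil K L G wh H x + Ftil_grad K G wh H x \<bullet> (z - x) \<le> Ftil K L G wh H z"
proof -
  have "(\<Sum>k=1..K-1. quadratic_model (L k (wh k)) (G k (wh k)) (H k) (wh k) x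
          + (G k (wh k) + H k *v (x - wh k)) \<bullet> (z - x))
      \<le> (\<Sum>k=1..K-1. quadratic_model (L k (wh k)) (G k (wh k)) (H k) (wh k) z)"
    by (intro sum_mono quadratic_model_gradient_inequality H_sym H_psd)
  moreover have "L K x + G K x \<bullet> (z - x) \<le> L K z"
    using convex_on_gradient_inequality[OF convex grad] .
  ultimately show ?thesis
    by (simp add: Ftil_def Ftil_grad_def Ltil_eq_sum_quadratic_model sum.distrib inner_sum_left
        inner_add_left divide_right_mono add_mono flip: distrib_left add_divide_distrib)
qed

lemma gradient_descent_Ftil:
  assumes "1 \<le> K"
    and H_sym: "\<And>k. k \<in> {1..K-1} \<Longrightarrow> transpose (H k) = H k"
    and H_psd: "\<And>k v. k \<in> {1..K-1} \<Longrightarrow> 0 \<le> v \<bullet> (H k *v v)"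
    and H_norm: "\<And>k. k \<in> {1..K-1} \<Longrightarrow> onorm (\<lambda>v. H k *v v) \<le> \<mu>"
    and convex: "convex_on UNIV (L K)" and grad: "\<And>x. (L K has_derivative (\<lambda>h. G K x \<bullet> h)) (at x)"
    and smooth: "\<And>x y. norm (G K x - G K y) \<le> \<mu> * norm (x - y)"
    and "0 < \<mu>" and "\<And>t. w (Suc t) = w t - (1 / \<mu>) *\<^sub>R Ftil_grad K G wh H (w t)"
  shows "gradient_descent (Ftil K L G wh H) (Ftil_grad K G wh H) \<mu> w"
proof
  show "(Ftil K L G wh H has_derivative (\<lambda>h. Ftil_grad K G wh H x \<bullet> h)) (at x)" for x
    using H_sym grad by (rule Ftil_has_derivative)
  show "norm (Ftil_grad K G wh H x - Ftil_grad K G wh H y) \<le> \<mu> * norm (x - y)" for x y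
    using \<open>1 \<le> K\<close> H_norm smooth by (rule Ftil_grad_lipschitz)
  show "Ftil K L G wh H x + Ftil_grad K G wh H x \<bullet> (z - x) \<le> Ftil K L G wh H z" for x z
    using H_sym H_psd convex grad by (rule Ftil_gradient_inequality)
qed (use assms in auto)

lemma Fobj_diff_le:
  assumes "1 \<le> K"
    and err: "\<And>k. k \<in> {1..K-1} \<Longrightarrow>
      (L k x - quadratic_model (L k (wh k)) (G k (wh k)) (H k) (wh k) x)
      - (L k y - quadratic_model (L k (wh k)) (G k (wh k)) (H k) (wh k) y) \<le> b k"
  shows "Fobj K L x - Fobj K L y
    \<le> Ftil K L G wh H x - Ftil K L G wh H y + (1 / real K) * (\<Sum>k=1..K-1. b k)"
proof -
  let ?e = "\<lambda>v k. L k v - quadratic_model (L k (wh k)) (G k (wh k)) (H k) (wh k) v"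
  have Fobj_split: "Fobj K L v = Ftil K L G wh H v + (1 / real K) * (\<Sum>k=1..K-1. ?e v k)" for v
  proof -
    have "(\<Sum>k=1..K. L k v) = (\<Sum>k=1..K-1. L k v) + L K v"
      using \<open>1 \<le> K\<close> by (cases K) (auto simp: sum.cl_ivl_Suc)
    then show ?thesis
      by (simp add: Fobj_def Ftil_def Ltil_eq_sum_quadratic_model sum_subtractf algebra_simps)
  qed
  have "(\<Sum>k=1..K-1. ?e x k - ?e y k) \<le> (\<Sum>k=1..K-1. b k)"
    by (intro sum_mono err)
  then have "(1 / real K) * (\<Sum>k=1..K-1. ?e x k) - (1 / real K) * (\<Sum>k=1..K-1. ?e y k)
      \<le> (1 / real K) * (\<Sum>k=1..K-1. b k)"
    by (simp add: sum_subtractf divide_right_mono flip: diff_divide_distrib)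
  then show ?thesis unfolding Fobj_split[of x] Fobj_split[of y] by linarith
qed

theorem theorem3:
  fixes K :: nat and T :: nat
    and L :: "nat \<Rightarrow> real^'n \<Rightarrow> real"
    and G :: "nat \<Rightarrow> real^'n \<Rightarrow> real^'n"
    and Hs :: "nat \<Rightarrow> real^'n \<Rightarrow> real^'n^'n"
    and \<mu> \<rho> \<delta> :: real
    and wh :: "nat \<Rightarrow> real^'n"
    and H :: "nat \<Rightarrow> real^'n^'n"
    and W :: "(real^'n) set"
    and wstar wtstar :: "real^'n"
    and Gt :: "real^'n \<Rightarrow> real^'n"
    and w :: "nat \<Rightarrow> real^'n"
  assumes K2: "K \<ge> 2"
    and grad: "\<And>k x. k \<in> {1..K} \<Longrightarrow> (L k has_derivative (\<lambda>h. G k x \<bullet> h)) (at x)"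
    and hess: "\<And>k x. k \<in> {1..K} \<Longrightarrow> (G k has_derivative (\<lambda>h. Hs k x *v h)) (at x)"
    and cvx: "\<And>k. k \<in> {1..K} \<Longrightarrow> convex_on UNIV (L k)"
    and mu_pos: "\<mu> > 0" and rho_nn: "\<rho> \<ge> 0" and delta_nn: "\<delta> \<ge> 0"
    and smooth: "\<And>k x y. k \<in> {1..K} \<Longrightarrow> norm (G k x - G k y) \<le> \<mu> * norm (x - y)"
    and hess_lip: "\<And>k x y. k \<in> {1..K} \<Longrightarrow>
                     onorm (\<lambda>v. (Hs k x - Hs k y) *v v) \<le> \<rho> * norm (x - y)"
    and H_sym: "\<And>k. k \<in> {1..K-1} \<Longrightarrow> transpose (H k) = H k"
    and H_psd: "\<And>k v. k \<in> {1..K-1} \<Longrightarrow> v \<bullet> (H k *v v) \<ge> 0"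
    and H_norm: "\<And>k. k \<in> {1..K-1} \<Longrightarrow> onorm (\<lambda>v. H k *v v) \<le> \<mu>"
    and H_approx: "\<And>k. k \<in> {1..K-1} \<Longrightarrow> onorm (\<lambda>v. (H k - Hs k (wh k)) *v v) \<le> \<delta>"
    and wstar_min: "wstar \<in> W" "\<And>v. v \<in> W \<Longrightarrow> Fobj K L wstar \<le> Fobj K L v"
    and wtstar_min: "wtstar \<in> W" "\<And>v. v \<in> W \<Longrightarrow> Ftil K L G wh H wtstar \<le> Ftil K L G wh H v"
    and grad_Ft: "\<And>x. (Ftil K L G wh H has_derivative (\<lambda>h. Gt x \<bullet> h)) (at x)"
    and w0: "w 0 = wh (K - 1)"
    and wstep: "\<And>t. w (Suc t) = w t - (1 / \<mu>) *\<^sub>R Gt (w t)"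
    and wW: "\<And>t. t \<le> T \<Longrightarrow> w t \<in> W"
    and T1: "T \<ge> 1"
  shows "Fobj K L (w T) - Fobj K L wstar \<le>
           (2 * \<mu> * (norm (w 0 - wtstar))^2) / real T
         + (1 / (2 * real K)) * (\<Sum>k=1..K-1.
              \<delta> * ((norm (wstar - wh k))^2 + 2 * (norm (w 0 - wtstar))^2 + 2 * (norm (wtstar - wh k))^2)
            + \<rho> * ((norm (wstar - wh k))^3 + 4 * (norm (w 0 - wtstar))^3 + 4 * (norm (wtstar - wh k))^3))"
proof -
  let ?Ft = "Ftil K L G wh H" and ?g = "Ftil_grad K G wh H"
    and ?q = "\<lambda>k. quadratic_model (L k (wh k)) (G k (wh k)) (H k) (wh k)"
  define D where "D = norm (w 0 - wtstar)"
  define B where "B k = \<delta> * ((norm (wstar - wh k))\<^sup>2 + 2 * D\<^sup>2 + 2 * (norm (wtstar - wh k))\<^sup>2)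
      + \<rho> * ((norm (wstar - wh k)) ^ 3 + 4 * D ^ 3 + 4 * (norm (wtstar - wh k)) ^ 3)" for k
  have K: "1 \<le> K" "K \<in> {1..K}"
    using K2 by auto
  have "(?Ft has_derivative (\<lambda>h. ?g x \<bullet> h)) (at x)" for x
    using H_sym grad[OF K(2)] by (rule Ftil_has_derivative)
  then have "Gt = ?g"
    using has_gradient_unique[OF grad_Ft] by blast
  then have step: "w (Suc t) = w t - (1 / \<mu>) *\<^sub>R ?g (w t)" for t
    using wstep by simp
  interpret gradient_descent ?Ft ?g \<mu> w
    by (rule gradient_descent_Ftil)
      (fact K(1) H_sym H_psd H_norm cvx[OF K(2)] grad[OF K(2)] smooth[OF K(2)] mu_pos step)+
  have "?Ft (w T) - ?Ft wtstar \<le> \<mu> * D\<^sup>2 / (2 * real T)"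
    unfolding D_def using T1 by (intro suboptimality_le) auto
  also have "\<dots> \<le> 2 * \<mu> * D\<^sup>2 / real T"
    using mu_pos T1 by (intro frac_le) auto
  finally have rate: "?Ft (w T) - ?Ft wstar \<le> 2 * \<mu> * D\<^sup>2 / real T"
    using wtstar_min(2)[OF wstar_min(1)] by linarith
  have near: "norm (w T - wtstar) \<le> D"
    unfolding D_def using wtstar_min(2) wW by (intro dist_le_initial) auto
  have "(L k (w T) - ?q k (w T)) - (L k wstar - ?q k wstar) \<le> 1/2 * B k" if "k \<in> {1..K-1}" for k
    using that near unfolding B_def
    by (intro quadratic_model_error_diff_le[where Hf = "Hs k"] grad hess hess_lip H_approx
        delta_nn rho_nn) auto
  then have "Fobj K L (w T) - Fobj K L wstar
      \<le> ?Ft (w T) - ?Ft wstar + 1 / real K * (\<Sum>k=1..K-1. 1/2 * B k)"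
    by (rule Fobj_diff_le[OF K(1)])
  also have "\<dots> \<le> 2 * \<mu> * D\<^sup>2 / real T + 1 / (2 * real K) * (\<Sum>k=1..K-1. B k)"
    using rate by (simp add: sum_divide_distrib[symmetric])
  finally show ?thesis
    by (simp only: B_def D_def)
qed

end
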